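(* Let $Sm(n)$ be the integer whose decimal expansion is the concatenation of $1,2,\ldots,n+1$. For every integer $n\geqslant 0$, put $$l=\lceil \log_{10}(n+2)\rceil,\qquad t_l=10^{l-1}-1,$$ $$\alpha_l=-\frac{10^{2l-1}+9\cdot 10^{l-1}}{(10^l-1)^2},\qquad \mu_l=-\frac{1}{10^l-1},\qquad \theta_l=\frac{s_2-2s_1+s_0}{(10^l-1)^2},$$ where $s_0=Sm(t_l)$, $s_1=Sm(t_l+1)$, $s_2=Sm(t_l+2)$. Then $$Sm(n)=\alpha_l+\mu_l\,(n-t_l)+\theta_l\,10^{l(n-t_l)}.$$
   Context: $Sm(0)=1$, $Sm(1)=12$, $Sm(2)=123$, $\ldots$ (Smarandache consecutive numbers). *)

theory Defs
  imports Complex_Main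
begin

text \<open>Number of decimal digits of a natural number (positive numbers; ndigits 0 = 1).\<close>
fun ndigits :: "nat \<Rightarrow> nat" where
  "ndigits k = (if k < 10 then 1 else 1 + ndigits (k div 10))"

definition dconcat :: "nat \<Rightarrow> nat \<Rightarrow> nat" where
  "dconcat a b = a * 10 ^ ndigits b + b"

fun Sm :: "nat \<Rightarrow> nat" where
  "Sm 0 = 1"
| "Sm (Suc n) = dconcat (Sm n) (n + 2)"

end

theory Submission
  imports Defs
begin

text \<open>As long as the appended number \<open>n + 2\<close> has \<open>l\<close> digits, the definition reads
  \<open>Sm (n + 1) = 10^l * Sm n + (n + 2)\<close>. Counted from \<open>t = 10^(l-1) - 1\<close>, this is a first-order
  linear recurrence in \<open>k = n - t\<close> with factor \<open>Q = 10^l\<close> and affine inhomogeneity, so its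
  solution is an affine particular solution \<open>\<alpha> + \<mu> k\<close> plus \<open>\<theta> Q^k\<close>; the second difference
  of the first three terms kills the affine part and recovers \<open>\<theta>\<close>.\<close>

lemma ndigits_eq:
  assumes "10 ^ m \<le> j" and "j < 10 ^ Suc m"
  shows "ndigits j = Suc m"
  using assms
proof (induction m arbitrary: j)
  case 0
  then show ?case by simp
next
  case (Suc m)
  have "10 ^ m \<le> j div 10" and "j div 10 < 10 ^ Suc m"
    using Suc.prems by (simp_all add: less_eq_div_iff_mult_less_eq div_less_iff_less_mult mult.commute)
  then have "ndigits (j div 10) = Suc m"
    by (rule Suc.IH)
  moreover have "\<not> j < 10"
    using Suc.prems(1) order_trans[of 10 "10 ^ Suc m" j] by fastforce
  ultimately show ?case
    by simp
qed

lemma affine_geometric_recurrence_closed_form: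
  fixes x :: "nat \<Rightarrow> 'a::field" and Q c :: 'a
  defines "a \<equiv> - (c * (Q - 1) + 1) / (Q - 1) ^ 2"
    and "b \<equiv> - 1 / (Q - 1)"
  assumes "Q \<noteq> 1"
    and "\<And>j. j < k \<Longrightarrow> x (Suc j) = Q * x j + c + of_nat j"
  shows "x k = a + b * of_nat k + (x 0 - a) * Q ^ k"
  using assms(4)
proof (induction k)
  case 0
  then show ?case by simp
next
  case (Suc k)
  have "Q - 1 \<noteq> 0"
    using \<open>Q \<noteq> 1\<close> by simp
  have a: "Q * a + c = a + b"
    using \<open>Q - 1 \<noteq> 0\<close> unfolding a_def b_def by (simp add: divide_simps) algebra
  have b: "Q * b + 1 = b"
    using \<open>Q - 1 \<noteq> 0\<close> unfolding b_def by (simp add: field_simps)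
  have "x (Suc k) = Q * (a + b * of_nat k + (x 0 - a) * Q ^ k) + c + of_nat k"
    using Suc by simp
  also have "\<dots> = (Q * a + c) + (Q * b + 1) * of_nat k + (x 0 - a) * Q ^ Suc k"
    by (simp add: algebra_simps)
  also have "\<dots> = a + b * of_nat (Suc k) + (x 0 - a) * Q ^ Suc k"
    unfolding a b by (simp add: algebra_simps)
  finally show ?case .
qed

lemma geometric_coeff_eq_second_difference:
  fixes x :: "nat \<Rightarrow> 'a::field"
  assumes "Q \<noteq> 1" and "\<And>k. k \<le> 2 \<Longrightarrow> x k = a + b * of_nat k + C * Q ^ k"
  shows "C = (x 2 - 2 * x 1 + x 0) / (Q - 1) ^ 2"
proof -
  have "x 2 - 2 * x 1 + x 0 = C * (Q - 1) ^ 2"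
    using assms(2)[of 0] assms(2)[of 1] assms(2)[of 2]
    by (simp add: algebra_simps power2_eq_square)
  then show ?thesis
    using assms(1) by simp
qed

lemma ceiling_log_nat_bounds:
  fixes b k :: nat
  defines "e \<equiv> nat \<lceil>log b k\<rceil>"
  assumes "b \<ge> 2" and "k \<ge> 2"
  shows "e \<ge> 1" and "b ^ (e - 1) < k" and "k \<le> b ^ e"
proof -
  have "log b k > 0"
    using assms by simp
  then have "\<lceil>log b k\<rceil> = int (e - 1) + 1" and "e \<ge> 1"
    unfolding e_def by linarith+
  then show "e \<ge> 1" and "b ^ (e - 1) < k" and "k \<le> b ^ e"
    using ceiling_log_nat_eq_powr_iff[of b k "e - 1"] assms by simp_all
qed

lemma Sm_recurrence_within_block:
  fixes l i :: nat
  defines "t \<equiv> 10 ^ (l - 1) - 1"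
  assumes "l \<ge> 1" and "t + i + 2 < 10 ^ l"
  shows "real (Sm (t + Suc i)) = 10 ^ l * real (Sm (t + i)) + (real t + 2) + real i"
proof -
  obtain m where l: "l = Suc m"
    using \<open>l \<ge> 1\<close> by (cases l) auto
  have "ndigits (t + i + 2) = l"
    using assms(3) unfolding t_def l by (intro ndigits_eq) auto
  then have "Sm (t + Suc i) = Sm (t + i) * 10 ^ l + (t + i + 2)"
    by (simp add: dconcat_def)
  then show ?thesis
    by simp
qed

lemma Sm_closed_form_within_block:
  fixes l k :: nat
  defines "t \<equiv> 10 ^ (l - 1) - 1"
  assumes "l \<ge> 1" and "t + k + 1 < 10 ^ l"
  shows "real (Sm (t + k)) =
     - ((10::real) ^ (2 * l - 1) + 9 * 10 ^ (l - 1)) / (10 ^ l - 1) ^ 2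
     + (- 1 / ((10::real) ^ l - 1)) * real k
     + ((real (Sm (t + 2)) - 2 * real (Sm (t + 1)) + real (Sm t)) / ((10::real) ^ l - 1) ^ 2)
       * (10 ^ l) ^ k"
proof -
  define p :: real where "p = 10 ^ (l - 1)"
  define Q :: real where "Q = 10 ^ l"
  obtain m where l: "l = Suc m"
    using \<open>l \<ge> 1\<close> by (cases l) auto
  have t: "real t + 1 = p" and Q: "Q = 10 * p"
    unfolding t_def p_def Q_def l by (simp_all add: of_nat_diff)
  then have "Q \<noteq> 1"
    by linarith
  define x where "x j = real (Sm (t + j))" for j
  define a where "a = - ((real t + 2) * (Q - 1) + 1) / (Q - 1) ^ 2"
  have closed: "x j = a + - 1 / (Q - 1) * of_nat j + (x 0 - a) * Q ^ j"
    if "t + j + 1 < 10 ^ l" for j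
    unfolding a_def x_def Q_def
    using that assms(2) Sm_recurrence_within_block[of l, folded t_def]
    by (intro affine_geometric_recurrence_closed_form[OF \<open>Q \<noteq> 1\<close>[unfolded Q_def]]) simp
  have "t + k + 1 < 10 ^ l" if "k \<le> 2" for k
  proof -
    have "k < 9 * 10 ^ m"
      using that one_le_power[of "10::nat" m] by linarith
    then show ?thesis
      unfolding t_def l by simp
  qed
  then have "x 0 - a = (x 2 - 2 * x 1 + x 0) / (Q - 1) ^ 2"
    using closed by (intro geometric_coeff_eq_second_difference[OF \<open>Q \<noteq> 1\<close>]) blast
  moreover have "a = - ((10::real) ^ (2 * l - 1) + 9 * 10 ^ (l - 1)) / (10 ^ l - 1) ^ 2"
  proof -
    have "(real t + 2) * (Q - 1) + 1 = Q * p + 9 * p"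
      unfolding Q t[symmetric] by (simp add: algebra_simps)
    moreover have "(10::real) ^ (2 * l - 1) = Q * p"
      unfolding Q_def p_def l by (simp add: mult_2 flip: power_add)
    ultimately show ?thesis
      unfolding a_def Q_def p_def by simp
  qed
  ultimately show ?thesis
    using closed[OF assms(3)] unfolding x_def Q_def by (simp add: numeral_2_eq_2)
qed

theorem corollary1:
  fixes n :: nat
  defines "l \<equiv> nat \<lceil>log 10 (real n + 2)\<rceil>"
  defines "t \<equiv> (10::nat) ^ (l - 1) - 1"
  shows "real (Sm n) =
     - ((10::real) ^ (2 * l - 1) + 9 * 10 ^ (l - 1)) / (10 ^ l - 1) ^ 2
     + (- 1 / ((10::real) ^ l - 1)) * (real n - real t)
     + ((real (Sm (t + 2)) - 2 * real (Sm (t + 1)) + real (Sm t)) / ((10::real) ^ l - 1) ^ 2)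
       * (10::real) powr (real l * (real n - real t))"
proof -
  have "l = nat \<lceil>log (real 10) (real (n + 2))\<rceil>"
    unfolding l_def by (simp add: add.commute)
  then have "l \<ge> 1" and "10 ^ (l - 1) < n + 2" and "n + 2 \<le> 10 ^ l"
    using ceiling_log_nat_bounds[of 10 "n + 2"] by simp_all
  then have "t \<le> n" and "t + (n - t) + 1 < 10 ^ l"
    unfolding t_def by simp_all
  moreover have "(10::real) powr (real l * (real n - real t)) = (10 ^ l) ^ (n - t)"
    using \<open>t \<le> n\<close> by (simp add: powr_realpow flip: of_nat_diff of_nat_mult power_mult)
  ultimately show ?thesis
    using Sm_closed_form_within_block[of l "n - t"] \<open>l \<ge> 1\<close> unfolding t_def by simp
qed

end
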